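(* Consider a parallel system (so $\phi(s)=1$ if and only if $s_k=1$ for at least one $k$), with an arbitrary joint prior distribution of the component states, inspection error rates $\epsilon_{FA},\epsilon_{FS}\in[0,1/2)$ identical for all components, failure cost $C_F>0$ and nonnegative repair costs $C_{R,1},\dots,C_{R,N}$. Then for every component $c_k$, $\mathrm{VoI}_L(k)$ equals the global-metric value of information $\mathrm{VoI}_G(k)$ computed with the concave function $l^*(p)=\min\{C_F\,p,\ \min_m C_{R,m}\}$; consequently, for any two components with $p_i\le p_j$ we have $\mathrm{VoI}_L(i)\ge\mathrm{VoI}_L(j)$, so the most reliable component has the highest local VoI, as under the global metric.
   Context: A system consists of $N$ binary components $c_1,\dots,c_N$ with random joint state $s\in\{0,1\}^N$ ($s_k=1$: working; $s_k=0$: failed), with arbitrary prior distribution; the system state is $u=\phi(s)$ ($u=0$: failure), $p_k=\mathbb{P}[s_k=0]$. Inspecting $c_k$ yields a binary observation $y_k$ (alarm $0$, silence $1$) which, given $s$, depends only on $s_k$, with $\mathbb{P}[y_k=1\mid s_k=0]=\epsilon_{FS}$, $\mathbb{P}[y_k=0\mid s_k=1]=\epsilon_{FA}$; $h_k=\mathbb{P}[y_k=0]$, and $p_{\omega|y_k=b}=\mathbb{P}[u=0\mid y_k=b]$. Local metric: an action is a vector $A=(a_1,\dots,a_N)\in\{0,1\}^N$ ($a_k=1$: replace $c_k$). Replacement is perfect: the post-action state $s'$ has $s'_k=1$ if $a_k=1$ and $s'_k=s_k$ otherwise. The loss is $\mathcal{L}(s',A)=C_F(1-\phi(s'))+\sum_k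 a_kC_{R,k}$. The prior loss is $L^L_\pi=\min_A\mathbb{E}[\mathcal{L}(s',A)]$; the posterior loss given $y_k=c$ is $L^L_{\omega|y_k=c}=\min_A\mathbb{E}[\mathcal{L}(s',A)\mid y_k=c]$; $L^L_\omega(k)=h_kL^L_{\omega|y_k=0}+(1-h_k)L^L_{\omega|y_k=1}$; and $\mathrm{VoI}_L(k)=L^L_\pi-L^L_\omega(k)$. Global metric: for a concave $l^*:[0,1]\to\mathbb{R}$, with $p_\pi=\mathbb{P}[u=0]$, $\mathrm{VoI}_G(k)=l^*(p_\pi)-[h_k\,l^*(p_{\omega|y_k=0})+(1-h_k)\,l^*(p_{\omega|y_k=1})]$ (terms with zero probability omitted). *)

theory Defs
  imports Complex_Main
begin

text \<open>Components are indexed by a finite type 'n (N = CARD('n)).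
  A joint state is s :: 'n => bool (True = working, False = failed).
  Observations are booleans: False = alarm (y = 0), True = silence (y = 1).\<close>

definition parallel :: "('n \<Rightarrow> bool) \<Rightarrow> bool" where
  "parallel s \<longleftrightarrow> (\<exists>k. s k)"

text \<open>P[y_k = b | s_k = sk]\<close>
definition obs_lik :: "real \<Rightarrow> real \<Rightarrow> bool \<Rightarrow> bool \<Rightarrow> real" where
  "obs_lik eFA eFS sk b =
     (if sk then (if b then 1 - eFA else eFA) else (if b then eFS else 1 - eFS))"

definition prob_fail_comp :: "(('n::finite \<Rightarrow> bool) \<Rightarrow> real) \<Rightarrow> 'n \<Rightarrow> real" where
  "prob_fail_comp pr k = (\<Sum>s\<in>UNIV. if \<not> s k then pr s else 0)"

definition prob_obs :: "(('n::finite \<Rightarrow> bool) \<Rightarrow> real) \<Rightarrow> real \<Rightarrow> real \<Rightarrow> 'n \<Rightarrow> bool \<Rightarrow> real" where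
  "prob_obs pr eFA eFS k b = (\<Sum>s\<in>UNIV. pr s * obs_lik eFA eFS (s k) b)"

definition posterior :: "(('n::finite \<Rightarrow> bool) \<Rightarrow> real) \<Rightarrow> real \<Rightarrow> real \<Rightarrow> 'n \<Rightarrow> bool
    \<Rightarrow> ('n \<Rightarrow> bool) \<Rightarrow> real" where
  "posterior pr eFA eFS k b s = pr s * obs_lik eFA eFS (s k) b / prob_obs pr eFA eFS k b"

definition prob_sys_fail :: "(('n::finite \<Rightarrow> bool) \<Rightarrow> bool) \<Rightarrow> (('n \<Rightarrow> bool) \<Rightarrow> real) \<Rightarrow> real" where
  "prob_sys_fail phi q = (\<Sum>s\<in>UNIV. if \<not> phi s then q s else 0)"

definition post_state :: "('n \<Rightarrow> bool) \<Rightarrow> ('n \<Rightarrow> bool) \<Rightarrow> ('n \<Rightarrow> bool)" where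
  "post_state s A = (\<lambda>i. if A i then True else s i)"

definition loss :: "(('n::finite \<Rightarrow> bool) \<Rightarrow> bool) \<Rightarrow> real \<Rightarrow> ('n \<Rightarrow> real)
    \<Rightarrow> ('n \<Rightarrow> bool) \<Rightarrow> ('n \<Rightarrow> bool) \<Rightarrow> real" where
  "loss phi CF CR s' A = CF * (if phi s' then 0 else 1) + (\<Sum>i\<in>UNIV. if A i then CR i else 0)"

definition exp_loss :: "(('n::finite \<Rightarrow> bool) \<Rightarrow> bool) \<Rightarrow> real \<Rightarrow> ('n \<Rightarrow> real)
    \<Rightarrow> (('n \<Rightarrow> bool) \<Rightarrow> real) \<Rightarrow> ('n \<Rightarrow> bool) \<Rightarrow> real" where
  "exp_loss phi CF CR q A = (\<Sum>s\<in>UNIV. q s * loss phi CF CR (post_state s A) A)"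

definition opt_loss :: "(('n::finite \<Rightarrow> bool) \<Rightarrow> bool) \<Rightarrow> real \<Rightarrow> ('n \<Rightarrow> real)
    \<Rightarrow> (('n \<Rightarrow> bool) \<Rightarrow> real) \<Rightarrow> real" where
  "opt_loss phi CF CR q = Min ((\<lambda>A. exp_loss phi CF CR q A) ` UNIV)"

text \<open>Local-metric VoI. Zero-probability observations contribute h * L = 0.\<close>
definition VoI_L :: "(('n::finite \<Rightarrow> bool) \<Rightarrow> bool) \<Rightarrow> real \<Rightarrow> ('n \<Rightarrow> real)
    \<Rightarrow> (('n \<Rightarrow> bool) \<Rightarrow> real) \<Rightarrow> real \<Rightarrow> real \<Rightarrow> 'n \<Rightarrow> real" where
  "VoI_L phi CF CR pr eFA eFS k =
     opt_loss phi CF CR pr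
     - (prob_obs pr eFA eFS k False * opt_loss phi CF CR (posterior pr eFA eFS k False)
        + prob_obs pr eFA eFS k True * opt_loss phi CF CR (posterior pr eFA eFS k True))"

definition VoI_G :: "(real \<Rightarrow> real) \<Rightarrow> (('n::finite \<Rightarrow> bool) \<Rightarrow> bool)
    \<Rightarrow> (('n \<Rightarrow> bool) \<Rightarrow> real) \<Rightarrow> real \<Rightarrow> real \<Rightarrow> 'n \<Rightarrow> real" where
  "VoI_G l phi pr eFA eFS k =
     l (prob_sys_fail phi pr)
     - ((if prob_obs pr eFA eFS k False = 0 then 0 else
          prob_obs pr eFA eFS k False * l (prob_sys_fail phi (posterior pr eFA eFS k False)))
        + (if prob_obs pr eFA eFS k True = 0 then 0 else
          prob_obs pr eFA eFS k True * l (prob_sys_fail phi (posterior pr eFA eFS k True))))"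

definition lstar :: "real \<Rightarrow> ('n::finite \<Rightarrow> real) \<Rightarrow> real \<Rightarrow> real" where
  "lstar CF CR p = min (CF * p) (Min (range CR))"

end

theory Submission
  imports Defs
begin

text \<open>Any action replacing at least one component makes a parallel system work, so under a
  (possibly unnormalised) weight q the optimal loss is
  min (C_F P_q[u = 0]) (mass q * min_m C_R,m).  The posterior given y_k is the weight
  pr s * P[y_k | s_k] divided by h_k, and system failure forces s_k = 0; multiplying back by
  h_k, the posterior terms of VoI_L and VoI_G are therefore both
  min (C_F P[y_k | s_k = 0] p_\<pi>) (h_k * min_m C_R,m).  Adding the two terms yields
  VoI_L(k) = max 0 (l*(p_\<pi>) - h_k min_m C_R,m - \<epsilon>_FS C_F p_\<pi>), which decreases
  with h_k = \<epsilon>_FA + (1 - \<epsilon>_FA - \<epsilon>_FS) p_k, hence with p_k.\<close>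

lemma repair_cost_ge_Min:
  fixes CR :: "'n::finite \<Rightarrow> real"
  assumes CR: "\<And>m. CR m \<ge> 0" and "A m"
  shows "Min (range CR) \<le> (\<Sum>i\<in>UNIV. if A i then CR i else 0)"
proof -
  have "Min (range CR) \<le> CR m" by simp
  also have "\<dots> = (if A m then CR m else 0)" using \<open>A m\<close> by simp
  also have "\<dots> \<le> (\<Sum>i\<in>UNIV. if A i then CR i else 0)"
    by (rule member_le_sum) (auto simp: CR)
  finally show ?thesis .
qed

lemma exp_loss_parallel:
  fixes q :: "('n::finite \<Rightarrow> bool) \<Rightarrow> real"
  shows "exp_loss parallel CF CR q A =
    (if \<exists>m. A m then (\<Sum>s\<in>UNIV. q s) * (\<Sum>i\<in>UNIV. if A i then CR i else 0)
     else CF * prob_sys_fail parallel q)"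
proof (cases "\<exists>m. A m")
  case True
  then have "\<And>s. parallel (post_state s A)" by (auto simp: parallel_def post_state_def)
  with True show ?thesis by (simp add: exp_loss_def loss_def sum_distrib_right)
next
  case False
  then have "A = (\<lambda>_. False)" by auto
  with False show ?thesis
    by (auto simp: exp_loss_def loss_def post_state_def prob_sys_fail_def sum_distrib_left
        intro!: sum.cong)
qed

text \<open>Replacing any component makes a parallel system work, so the cheapest such action is a
  single replacement of the cheapest component, and the only alternative is to do nothing.\<close>

lemma opt_loss_parallel:
  fixes q :: "('n::finite \<Rightarrow> bool) \<Rightarrow> real"
  assumes CR: "\<And>m. CR m \<ge> 0" and mass: "(\<Sum>s\<in>UNIV. q s) \<ge> 0"
  shows "opt_loss parallel CF CR q
    = min (CF * prob_sys_fail parallel q) ((\<Sum>s\<in>UNIV. q s) * Min (range CR))"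
  unfolding opt_loss_def
proof (rule Min_eqI)
  show "finite (range (exp_loss parallel CF CR q))" by simp
next
  fix y assume "y \<in> range (exp_loss parallel CF CR q)"
  then obtain A where y: "y = exp_loss parallel CF CR q A" by auto
  show "min (CF * prob_sys_fail parallel q) ((\<Sum>s\<in>UNIV. q s) * Min (range CR)) \<le> y"
  proof (cases "\<exists>m. A m")
    case True
    then obtain m where "A m" by auto
    with mass have "(\<Sum>s\<in>UNIV. q s) * Min (range CR)
        \<le> (\<Sum>s\<in>UNIV. q s) * (\<Sum>i\<in>UNIV. if A i then CR i else 0)"
      by (simp add: mult_left_mono repair_cost_ge_Min[OF CR])
    with True y show ?thesis by (simp add: exp_loss_parallel)
  next
    case False
    with y show ?thesis by (simp add: exp_loss_parallel)
  qed
next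
  obtain m where m: "CR m = Min (range CR)"
    by (metis Min_in UNIV_not_empty empty_is_image finite_UNIV finite_imageI imageE)
  have "exp_loss parallel CF CR q (\<lambda>i. i = m) = (\<Sum>s\<in>UNIV. q s) * Min (range CR)"
    using m by (simp add: exp_loss_parallel sum.delta)
  moreover have "exp_loss parallel CF CR q (\<lambda>_. False) = CF * prob_sys_fail parallel q"
    by (simp add: exp_loss_parallel)
  ultimately show "min (CF * prob_sys_fail parallel q) ((\<Sum>s\<in>UNIV. q s) * Min (range CR))
      \<in> range (exp_loss parallel CF CR q)"
    by (metis min_def rangeI)
qed

lemma prob_sys_fail_nonneg:
  fixes q :: "('n::finite \<Rightarrow> bool) \<Rightarrow> real"
  assumes "\<And>s. q s \<ge> 0"
  shows "prob_sys_fail phi q \<ge> 0"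
  unfolding prob_sys_fail_def by (rule sum_nonneg) (simp add: assms)

lemma prob_sys_fail_divide:
  fixes q :: "('n::finite \<Rightarrow> bool) \<Rightarrow> real"
  shows "prob_sys_fail phi (\<lambda>s. q s / t) = prob_sys_fail phi q / t"
  unfolding prob_sys_fail_def sum_divide_distrib by (rule sum.cong) auto

text \<open>A parallel system fails only if every component, in particular c_k, has failed.\<close>

lemma prob_sys_fail_parallel_reweight:
  fixes q :: "('n::finite \<Rightarrow> bool) \<Rightarrow> real"
  shows "prob_sys_fail parallel (\<lambda>s. q s * w (s k)) = w False * prob_sys_fail parallel q"
  unfolding prob_sys_fail_def sum_distrib_left
  by (rule sum.cong) (auto simp: parallel_def)

text \<open>At zero mass t the normalised weight is the junk value q / 0 = 0: VoI_L multiplies its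
  loss by t = 0, while VoI_G omits the term, and both give the same value.\<close>

lemma opt_loss_parallel_normalise:
  fixes q :: "('n::finite \<Rightarrow> bool) \<Rightarrow> real"
  assumes q: "\<And>s. q s \<ge> 0" and CF: "CF \<ge> 0" and CR: "\<And>m. CR m \<ge> 0"
  defines "t \<equiv> \<Sum>s\<in>UNIV. q s"
  shows "t * opt_loss parallel CF CR (\<lambda>s. q s / t)
      = min (CF * prob_sys_fail parallel q) (t * Min (range CR))"
    and "(if t = 0 then 0 else t * lstar CF CR (prob_sys_fail parallel (\<lambda>s. q s / t)))
      = min (CF * prob_sys_fail parallel q) (t * Min (range CR))"
proof -
  have t: "t \<ge> 0" unfolding t_def by (simp add: q sum_nonneg)
  have F: "CF * prob_sys_fail parallel q \<ge> 0" using CF prob_sys_fail_nonneg[of q, OF q] by simp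
  have c: "Min (range CR) \<ge> 0" using CR by (simp add: Min_ge_iff)
  have mass: "(\<Sum>s\<in>UNIV. q s / t) = t / t"
    unfolding t_def by (simp add: sum_divide_distrib[symmetric])
  have scale: "t * min (CF * X / t) c = min (CF * X) (t * c)" if "t > 0" for X c
    using that by (auto simp: min_def field_simps)
  show "t * opt_loss parallel CF CR (\<lambda>s. q s / t)
      = min (CF * prob_sys_fail parallel q) (t * Min (range CR))"
  proof (cases "t = 0")
    case False
    with t have "t > 0" by simp
    then show ?thesis
      using opt_loss_parallel[where CR = CR and q = "\<lambda>s. q s / t", OF CR] mass
      by (simp add: prob_sys_fail_divide scale)
  qed (use F c in simp)
  show "(if t = 0 then 0 else t * lstar CF CR (prob_sys_fail parallel (\<lambda>s. q s / t)))
      = min (CF * prob_sys_fail parallel q) (t * Min (range CR))"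
  proof (cases "t = 0")
    case False
    with t have "t > 0" by simp
    then show ?thesis by (simp add: lstar_def prob_sys_fail_divide scale)
  qed (use F c in simp)
qed

lemma posterior_eq_normalised:
  "posterior pr eFA eFS k b = (\<lambda>s. q s / (\<Sum>s\<in>UNIV. q s))"
  if "q = (\<lambda>s. pr s * obs_lik eFA eFS (s k) b)"
  using that by (simp add: posterior_def prob_obs_def fun_eq_iff)

lemma weighted_posterior_loss_parallel:
  fixes pr :: "('n::finite \<Rightarrow> bool) \<Rightarrow> real" and k :: 'n and b :: bool
  assumes pr: "\<And>s. pr s \<ge> 0"
    and e: "0 \<le> eFA" "eFA \<le> 1" "0 \<le> eFS" "eFS \<le> 1"
    and CF: "CF \<ge> 0" and CR: "\<And>m. CR m \<ge> 0"
  defines "h \<equiv> prob_obs pr eFA eFS k b"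
  shows "h * opt_loss parallel CF CR (posterior pr eFA eFS k b)
      = min (CF * (obs_lik eFA eFS False b * prob_sys_fail parallel pr)) (h * Min (range CR))"
    and "(if h = 0 then 0 else h * lstar CF CR (prob_sys_fail parallel (posterior pr eFA eFS k b)))
      = min (CF * (obs_lik eFA eFS False b * prob_sys_fail parallel pr)) (h * Min (range CR))"
proof -
  define q where "q = (\<lambda>s. pr s * obs_lik eFA eFS (s k) b)"
  have "\<And>s. q s \<ge> 0" using pr e by (simp add: q_def obs_lik_def)
  note normalise = opt_loss_parallel_normalise[where q = q and CR = CR, OF this CF CR]
  have h: "h = (\<Sum>s\<in>UNIV. q s)" by (simp add: h_def q_def prob_obs_def)
  have F: "prob_sys_fail parallel q = obs_lik eFA eFS False b * prob_sys_fail parallel pr"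
    unfolding q_def by (rule prob_sys_fail_parallel_reweight)
  show "h * opt_loss parallel CF CR (posterior pr eFA eFS k b)
      = min (CF * (obs_lik eFA eFS False b * prob_sys_fail parallel pr)) (h * Min (range CR))"
    and "(if h = 0 then 0 else h * lstar CF CR (prob_sys_fail parallel (posterior pr eFA eFS k b)))
      = min (CF * (obs_lik eFA eFS False b * prob_sys_fail parallel pr)) (h * Min (range CR))"
    by (simp_all only: h posterior_eq_normalised[OF q_def] normalise F)
qed

lemma opt_loss_prior_parallel:
  fixes pr :: "('n::finite \<Rightarrow> bool) \<Rightarrow> real"
  assumes "(\<Sum>s\<in>UNIV. pr s) = 1" and CR: "\<And>m. CR m \<ge> 0"
  shows "opt_loss parallel CF CR pr = lstar CF CR (prob_sys_fail parallel pr)"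
  using opt_loss_parallel[where CR = CR and q = pr, OF CR] assms(1) by (simp add: lstar_def)

theorem VoI_L_eq_VoI_G_parallel:
  fixes pr :: "('n::finite \<Rightarrow> bool) \<Rightarrow> real"
  assumes pr: "\<And>s. pr s \<ge> 0" "(\<Sum>s\<in>UNIV. pr s) = 1"
    and e: "0 \<le> eFA" "eFA \<le> 1" "0 \<le> eFS" "eFS \<le> 1"
    and CF: "CF \<ge> 0" and CR: "\<And>m. CR m \<ge> 0"
  shows "VoI_L parallel CF CR pr eFA eFS k = VoI_G (lstar CF CR) parallel pr eFA eFS k"
  by (simp add: VoI_L_def VoI_G_def opt_loss_prior_parallel[where CR = CR, OF pr(2) CR]
      weighted_posterior_loss_parallel[where CR = CR, OF pr(1) e CF CR])

lemma prob_obs_alarm: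
  fixes pr :: "('n::finite \<Rightarrow> bool) \<Rightarrow> real"
  assumes "(\<Sum>s\<in>UNIV. pr s) = 1"
  shows "prob_obs pr eFA eFS k False = eFA + (1 - eFA - eFS) * prob_fail_comp pr k"
proof -
  have "prob_obs pr eFA eFS k False
      = (\<Sum>s\<in>UNIV. eFA * pr s + (1 - eFA - eFS) * (if \<not> s k then pr s else 0))"
    unfolding prob_obs_def by (rule sum.cong) (auto simp: obs_lik_def algebra_simps)
  also have "\<dots> = eFA * (\<Sum>s\<in>UNIV. pr s) + (1 - eFA - eFS) * prob_fail_comp pr k"
    by (simp add: sum.distrib sum_distrib_left prob_fail_comp_def)
  finally show ?thesis using assms by simp
qed

lemma prob_obs_silence:
  fixes pr :: "('n::finite \<Rightarrow> bool) \<Rightarrow> real"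
  assumes "(\<Sum>s\<in>UNIV. pr s) = 1"
  shows "prob_obs pr eFA eFS k True = 1 - prob_obs pr eFA eFS k False"
proof -
  have "prob_obs pr eFA eFS k True = (\<Sum>s\<in>UNIV. pr s - pr s * obs_lik eFA eFS (s k) False)"
    unfolding prob_obs_def by (rule sum.cong) (auto simp: obs_lik_def algebra_simps)
  with assms show ?thesis by (simp add: sum_subtractf prob_obs_def)
qed

lemma prob_fail_comp_le_1:
  fixes pr :: "('n::finite \<Rightarrow> bool) \<Rightarrow> real"
  assumes "\<And>s. pr s \<ge> 0" "(\<Sum>s\<in>UNIV. pr s) = 1"
  shows "prob_fail_comp pr k \<le> 1"
proof -
  have "prob_fail_comp pr k \<le> (\<Sum>s\<in>UNIV. pr s)"
    unfolding prob_fail_comp_def by (rule sum_mono) (simp add: assms(1))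
  with assms(2) show ?thesis by simp
qed

text \<open>Expanding the sum of minima gives four candidates; for x \<le> 1 - e the candidate
  (1 - e) a + (1 - x) c dominates the convex combination (1 - e) a + e c of the constant
  candidates a and c, so it is never the minimum.\<close>

lemma min_add_min_eq:
  fixes a c e x :: real
  assumes "0 \<le> e" "e \<le> 1" "c \<ge> 0" "x \<le> 1 - e"
  shows "min ((1 - e) * a) (x * c) + min (e * a) ((1 - x) * c) = min (min a c) (x * c + e * a)"
proof -
  have "min a c \<le> (1 - e) * a + e * c"
  proof -
    have "(1 - e) * min a c \<le> (1 - e) * a" "e * min a c \<le> e * c"
      using assms by (simp_all add: mult_left_mono)
    then show ?thesis by (simp add: algebra_simps)
  qed
  also have "\<dots> \<le> (1 - e) * a + (1 - x) * c"
    using assms by (simp add: mult_right_mono)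
  finally have "min a c \<le> (1 - e) * a + (1 - x) * c" .
  moreover have "min A B + min C D = min (min (A + C) (A + D)) (min (B + C) (B + D))"
    for A B C D :: real
    by (simp add: min_def)
  ultimately show ?thesis
    by (auto simp: min_def algebra_simps)
qed

lemma VoI_L_parallel_closed_form:
  fixes pr :: "('n::finite \<Rightarrow> bool) \<Rightarrow> real"
  assumes pr: "\<And>s. pr s \<ge> 0" "(\<Sum>s\<in>UNIV. pr s) = 1"
    and e: "0 \<le> eFA" "0 \<le> eFS" "eFA + eFS \<le> 1"
    and CF: "CF \<ge> 0" and CR: "\<And>m. CR m \<ge> 0"
  shows "VoI_L parallel CF CR pr eFA eFS k = max 0 (lstar CF CR (prob_sys_fail parallel pr)
      - (prob_obs pr eFA eFS k False * Min (range CR) + eFS * (CF * prob_sys_fail parallel pr)))"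
proof -
  let ?F = "prob_sys_fail parallel pr" and ?c = "Min (range CR)"
    and ?h = "prob_obs pr eFA eFS k False"
  have e_le_1: "eFA \<le> 1" "eFS \<le> 1" using e by simp_all
  have "(1 - eFA - eFS) * prob_fail_comp pr k \<le> 1 - eFA - eFS"
    using e prob_fail_comp_le_1[OF pr] by (simp add: mult_left_le)
  then have h_le: "?h \<le> 1 - eFS" using prob_obs_alarm[OF pr(2)] by simp
  have c: "?c \<ge> 0" using CR by (simp add: Min_ge_iff)
  note posterior_loss = weighted_posterior_loss_parallel(1)
    [where CR = CR, OF pr(1) e(1) e_le_1(1) e(2) e_le_1(2) CF CR]
  have "VoI_L parallel CF CR pr eFA eFS k = lstar CF CR ?F
      - (min ((1 - eFS) * (CF * ?F)) (?h * ?c)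
         + min (eFS * (CF * ?F)) (prob_obs pr eFA eFS k True * ?c))"
    by (simp add: VoI_L_def opt_loss_prior_parallel[where CR = CR, OF pr(2) CR] posterior_loss
        obs_lik_def mult_ac)
  also have "\<dots> = lstar CF CR ?F - min (lstar CF CR ?F) (?h * ?c + eFS * (CF * ?F))"
    using min_add_min_eq[OF e(2) e_le_1(2) c h_le]
    by (simp add: prob_obs_silence[OF pr(2)] lstar_def)
  finally show ?thesis by (simp add: min_def max_def)
qed

theorem VoI_L_antimono_parallel:
  fixes pr :: "('n::finite \<Rightarrow> bool) \<Rightarrow> real"
  assumes pr: "\<And>s. pr s \<ge> 0" "(\<Sum>s\<in>UNIV. pr s) = 1"
    and e: "0 \<le> eFA" "0 \<le> eFS" "eFA + eFS \<le> 1"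
    and CF: "CF \<ge> 0" and CR: "\<And>m. CR m \<ge> 0"
    and p: "prob_fail_comp pr i \<le> prob_fail_comp pr j"
  shows "VoI_L parallel CF CR pr eFA eFS j \<le> VoI_L parallel CF CR pr eFA eFS i"
proof -
  have "prob_obs pr eFA eFS i False \<le> prob_obs pr eFA eFS j False"
    using p e by (simp add: prob_obs_alarm[OF pr(2)] mult_left_mono)
  moreover have "Min (range CR) \<ge> 0" using CR by (simp add: Min_ge_iff)
  ultimately have "prob_obs pr eFA eFS i False * Min (range CR)
      \<le> prob_obs pr eFA eFS j False * Min (range CR)"
    by (rule mult_right_mono)
  then show ?thesis
    by (simp add: VoI_L_parallel_closed_form[where CR = CR, OF pr e CF CR])
qed

theorem mainTheorem4:
  fixes pr :: "('n::finite \<Rightarrow> bool) \<Rightarrow> real"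
    and CR :: "'n \<Rightarrow> real"
    and CF eFA eFS :: real
  assumes pr_nonneg: "\<And>s. pr s \<ge> 0"
    and pr_sum: "(\<Sum>s\<in>UNIV. pr s) = 1"
    and eFA: "0 \<le> eFA" "eFA < 1/2"
    and eFS: "0 \<le> eFS" "eFS < 1/2"
    and CF: "CF > 0"
    and CR: "\<And>m. CR m \<ge> 0"
  shows "(\<forall>k. VoI_L parallel CF CR pr eFA eFS k = VoI_G (lstar CF CR) parallel pr eFA eFS k)
       \<and> (\<forall>i j. prob_fail_comp pr i \<le> prob_fail_comp pr j \<longrightarrow>
             VoI_L parallel CF CR pr eFA eFS i \<ge> VoI_L parallel CF CR pr eFA eFS j)"
proof -
  have e: "0 \<le> eFA" "eFA \<le> 1" "0 \<le> eFS" "eFS \<le> 1" "eFA + eFS \<le> 1"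
    using eFA eFS by simp_all
  have CF': "CF \<ge> 0" using CF by simp
  show ?thesis
    using VoI_L_eq_VoI_G_parallel[where CR = CR, OF pr_nonneg pr_sum e(1-4) CF' CR]
      VoI_L_antimono_parallel[where CR = CR, OF pr_nonneg pr_sum e(1,3,5) CF' CR]
    by blast
qed

end
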